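(* Let $\mathfrak l$ be a real finite-dimensional nilpotent Lie algebra with $\dim\mathfrak l'=2$ and $\mathfrak l'\subset\mathfrak z(\mathfrak l)$, having a basis $X_1,\dots,X_n,Y,Z$ ($n\ge4$) with $[X_1,X_2]=Y$, $[X_1,X_3]=Z$, $[X_2,X_3]=0$, $[X_1,X_4]=0$, $[X_2,X_4]=Z$, and $[X_1,X_j]=[X_2,X_j]=0$ for $j\ge5$. Let $\mathfrak a$ be a semisimple orthogonal $\mathfrak l$-module and $[\alpha,\gamma]\in\mathcal H^2_Q(\mathfrak l,\mathfrak a)$ admissible, represented with $\alpha(\mathfrak l,\mathfrak l)\subset\mathfrak a^{\mathfrak l}$. Then $\alpha([X_3,X_j],\cdot)=0$ for all $j\ge5$.
   Context: For a Lie algebra $\mathfrak l$: $\mathfrak l^1=\mathfrak l$, $\mathfrak l^{k+1}=[\mathfrak l,\mathfrak l^k]$, $\mathfrak l'=\mathfrak l^2$, $\mathfrak z(\mathfrak l)$ the centre. An orthogonal $\mathfrak l$-module $(\rho,\mathfrak a)$ is a finite-dimensional real vector space with a nondegenerate symmetric bilinear form $\langle\cdot,\cdot\rangle_{\mathfrak a}$ and a representation by skew-adjoint maps; $\mathfrak a^{\mathfrak l}$ its invariants. $C^p(\mathfrak l,\mathfrak a)$: alternating $p$-linear maps with Chevalley–Eilenberg differential $d$; $C^p(\mathfrak l)=C^p(\mathfrak l,\mathbb R)$; $\langle\alpha\wedge\beta\rangle$ is the wedge product followed by contraction with $\langle\cdot,\cdot\rangle_{\mathfrak a}$. $\mathcal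 Z^2_Q(\mathfrak l,\mathfrak a)=\{(\alpha,\gamma)\in C^2(\mathfrak l,\mathfrak a)\oplus C^3(\mathfrak l): d\alpha=0,d\gamma=\frac12\langle\alpha\wedge\alpha\rangle\}$; the group $C^1(\mathfrak l,\mathfrak a)\oplus C^2(\mathfrak l)$ with $(\tau_1,\sigma_1)*(\tau_2,\sigma_2)=(\tau_1+\tau_2,\sigma_1+\sigma_2+\frac12\langle\tau_1\wedge\tau_2\rangle)$ acts by $(\alpha,\gamma)(\tau,\sigma)=(\alpha+d\tau,\gamma+d\sigma+\langle(\alpha+\frac12d\tau)\wedge\tau\rangle)$; $\mathcal H^2_Q(\mathfrak l,\mathfrak a)$ is the orbit set. Admissibility: with $\mathfrak l^{m+2}=0$, $\mathfrak l_{(0)}=\mathfrak z(\mathfrak l)\cap\ker\rho$, $\mathfrak l_{(k)}=\mathfrak z(\mathfrak l)\cap\mathfrak l^{k+1}$ ($k\ge1$), and a representative with $\alpha(\mathfrak l,\mathfrak l)\subset\mathfrak a^{\mathfrak l}$, the class is admissible iff for all $0\le k\le m$: $(A_k)$ whenever $L_0\in\mathfrak l_{(k)}$ and there are $A_0\in\mathfrak a$, $Z_0\in(\mathfrak l^{k+1})^*$ with $\alpha(L,L_0)=0$ and $\gamma(L,L_0,\cdot)=-\langle A_0,\alpha(L,\cdot)\rangle_{\mathfrak a}+\langle Z_0,[L,\cdot]\rangle$ on $\mathfrak l^{k+1}$ for all $L$, then $L_0=0$; $(B_k)$ $\alpha$ applied to the kernel of the bracket map $\mathfrak l\otimes\mathfrak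 l^{k+1}\to\mathfrak l$ is a nondegenerate subspace of $\mathfrak a$. *)

theory Defs
  imports Main "HOL.Real_Vector_Spaces"
begin

definition lie_algebra :: "('l::real_vector \<Rightarrow> 'l \<Rightarrow> 'l) \<Rightarrow> bool" where
  "lie_algebra br \<longleftrightarrow>
     (\<forall>x. linear (br x)) \<and> (\<forall>y. linear (\<lambda>x. br x y)) \<and>
     (\<forall>x. br x x = 0) \<and>
     (\<forall>x y z. br x (br y z) + br y (br z x) + br z (br x y) = 0)"

text \<open>Lower central series: lcs br 1 = l, lcs br (k+1) = [l, lcs br k]
  (linear span of brackets). The index 0 is unused and set to l.\<close>
fun lcs :: "('l::real_vector \<Rightarrow> 'l \<Rightarrow> 'l) \<Rightarrow> nat \<Rightarrow> 'l set" where
  "lcs br 0 = UNIV"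
| "lcs br (Suc 0) = UNIV"
| "lcs br (Suc (Suc k)) = span {br x y | x y. y \<in> lcs br (Suc k)}"

definition nilpotent_lie :: "('l::real_vector \<Rightarrow> 'l \<Rightarrow> 'l) \<Rightarrow> bool" where
  "nilpotent_lie br \<longleftrightarrow> (\<exists>k. lcs br k = {0})"

definition centre :: "('l::real_vector \<Rightarrow> 'l \<Rightarrow> 'l) \<Rightarrow> 'l set" where
  "centre br = {z. \<forall>x. br x z = 0}"

definition finite_dim :: "'v::real_vector itself \<Rightarrow> bool" where
  "finite_dim _ \<longleftrightarrow> (\<exists>S::'v set. finite S \<and> span S = UNIV)"

definition orthogonal_module ::
  "('l::real_vector \<Rightarrow> 'l \<Rightarrow> 'l) \<Rightarrow> ('l \<Rightarrow> 'v::real_vector \<Rightarrow> 'v) \<Rightarrow> ('v \<Rightarrow> 'v \<Rightarrow> real) \<Rightarrow> bool" where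
  "orthogonal_module br rho B \<longleftrightarrow>
     finite_dim TYPE('v) \<and>
     (\<forall>u. linear (B u)) \<and> (\<forall>u v. B u v = B v u) \<and>
     (\<forall>u. (\<forall>v. B u v = 0) \<longrightarrow> u = 0) \<and>
     (\<forall>x. linear (rho x)) \<and> (\<forall>u. linear (\<lambda>x. rho x u)) \<and>
     (\<forall>x y u. rho (br x y) u = rho x (rho y u) - rho y (rho x u)) \<and>
     (\<forall>x u v. B (rho x u) v + B u (rho x v) = 0)"

definition invariant_subspace :: "('l \<Rightarrow> 'v::real_vector \<Rightarrow> 'v) \<Rightarrow> 'v set \<Rightarrow> bool" where
  "invariant_subspace rho U \<longleftrightarrow> subspace U \<and> (\<forall>x. \<forall>u\<in>U. rho x u \<in> U)"

text \<open>Semisimple = completely reducible: every submodule has a complementary submodule.\<close>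
definition semisimple_module :: "('l \<Rightarrow> 'v::real_vector \<Rightarrow> 'v) \<Rightarrow> bool" where
  "semisimple_module rho \<longleftrightarrow>
     (\<forall>U. invariant_subspace rho U \<longrightarrow>
        (\<exists>W. invariant_subspace rho W \<and> U \<inter> W = {0} \<and> {u + w | u w. u \<in> U \<and> w \<in> W} = UNIV))"

definition invariants :: "('l \<Rightarrow> 'v::real_vector \<Rightarrow> 'v) \<Rightarrow> 'v set" where
  "invariants rho = {u. \<forall>x. rho x u = 0}"

definition cochain2 :: "('l::real_vector \<Rightarrow> 'l \<Rightarrow> 'v::real_vector) \<Rightarrow> bool" where
  "cochain2 \<alpha> \<longleftrightarrow> (\<forall>x. linear (\<alpha> x)) \<and> (\<forall>y. linear (\<lambda>x. \<alpha> x y)) \<and> (\<forall>x. \<alpha> x x = 0)"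

definition cochain3 :: "('l::real_vector \<Rightarrow> 'l \<Rightarrow> 'l \<Rightarrow> real) \<Rightarrow> bool" where
  "cochain3 \<gamma> \<longleftrightarrow> (\<forall>x y. linear (\<gamma> x y)) \<and> (\<forall>x z. linear (\<lambda>y. \<gamma> x y z)) \<and>
     (\<forall>y z. linear (\<lambda>x. \<gamma> x y z)) \<and>
     (\<forall>x y. \<gamma> x x y = 0) \<and> (\<forall>x y. \<gamma> x y y = 0) \<and> (\<forall>x y. \<gamma> x y x = 0)"

definition d2 :: "('l::real_vector \<Rightarrow> 'l \<Rightarrow> 'l) \<Rightarrow> ('l \<Rightarrow> 'v::real_vector \<Rightarrow> 'v) \<Rightarrow>
    ('l \<Rightarrow> 'l \<Rightarrow> 'v) \<Rightarrow> 'l \<Rightarrow> 'l \<Rightarrow> 'l \<Rightarrow> 'v" where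
  "d2 br rho \<alpha> x y z =
     rho x (\<alpha> y z) - rho y (\<alpha> x z) + rho z (\<alpha> x y)
     - \<alpha> (br x y) z + \<alpha> (br x z) y - \<alpha> (br y z) x"

definition d3 :: "('l::real_vector \<Rightarrow> 'l \<Rightarrow> 'l) \<Rightarrow> ('l \<Rightarrow> 'l \<Rightarrow> 'l \<Rightarrow> real) \<Rightarrow>
    'l \<Rightarrow> 'l \<Rightarrow> 'l \<Rightarrow> 'l \<Rightarrow> real" where
  "d3 br \<gamma> x1 x2 x3 x4 =
     - \<gamma> (br x1 x2) x3 x4 + \<gamma> (br x1 x3) x2 x4 - \<gamma> (br x1 x4) x2 x3
     - \<gamma> (br x2 x3) x1 x4 + \<gamma> (br x2 x4) x1 x3 - \<gamma> (br x3 x4) x1 x2"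

text \<open>\<langle>\<alpha> \<and> \<beta>\<rangle> for 2-cochains: sum over (2,2)-shuffles with signs, contracted with B.\<close>
definition wedge_contr :: "('v \<Rightarrow> 'v \<Rightarrow> real) \<Rightarrow> ('l \<Rightarrow> 'l \<Rightarrow> 'v) \<Rightarrow> ('l \<Rightarrow> 'l \<Rightarrow> 'v) \<Rightarrow>
    'l \<Rightarrow> 'l \<Rightarrow> 'l \<Rightarrow> 'l \<Rightarrow> real" where
  "wedge_contr B \<alpha> \<beta> x1 x2 x3 x4 =
     B (\<alpha> x1 x2) (\<beta> x3 x4) - B (\<alpha> x1 x3) (\<beta> x2 x4) + B (\<alpha> x1 x4) (\<beta> x2 x3)
     + B (\<alpha> x2 x3) (\<beta> x1 x4) - B (\<alpha> x2 x4) (\<beta> x1 x3) + B (\<alpha> x3 x4) (\<beta> x1 x2)"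

definition quad_cocycle ::
  "('l::real_vector \<Rightarrow> 'l \<Rightarrow> 'l) \<Rightarrow> ('l \<Rightarrow> 'v::real_vector \<Rightarrow> 'v) \<Rightarrow> ('v \<Rightarrow> 'v \<Rightarrow> real) \<Rightarrow>
    ('l \<Rightarrow> 'l \<Rightarrow> 'v) \<Rightarrow> ('l \<Rightarrow> 'l \<Rightarrow> 'l \<Rightarrow> real) \<Rightarrow> bool" where
  "quad_cocycle br rho B \<alpha> \<gamma> \<longleftrightarrow>
     cochain2 \<alpha> \<and> cochain3 \<gamma> \<and>
     (\<forall>x y z. d2 br rho \<alpha> x y z = 0) \<and>
     (\<forall>x1 x2 x3 x4. d3 br \<gamma> x1 x2 x3 x4 = (1/2) * wedge_contr B \<alpha> \<alpha> x1 x2 x3 x4)"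

definition linear_on :: "'l::real_vector set \<Rightarrow> ('l \<Rightarrow> real) \<Rightarrow> bool" where
  "linear_on S f \<longleftrightarrow> (\<forall>x\<in>S. \<forall>y\<in>S. f (x + y) = f x + f y) \<and> (\<forall>c. \<forall>x\<in>S. f (c *\<^sub>R x) = c * f x)"

definition lsub :: "('l::real_vector \<Rightarrow> 'l \<Rightarrow> 'l) \<Rightarrow> ('l \<Rightarrow> 'v::real_vector \<Rightarrow> 'v) \<Rightarrow> nat \<Rightarrow> 'l set" where
  "lsub br rho k = (if k = 0 then centre br \<inter> {x. \<forall>u. rho x u = 0}
                    else centre br \<inter> lcs br (k + 1))"

definition condA ::
  "('l::real_vector \<Rightarrow> 'l \<Rightarrow> 'l) \<Rightarrow> ('l \<Rightarrow> 'v::real_vector \<Rightarrow> 'v) \<Rightarrow> ('v \<Rightarrow> 'v \<Rightarrow> real) \<Rightarrow>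
    ('l \<Rightarrow> 'l \<Rightarrow> 'v) \<Rightarrow> ('l \<Rightarrow> 'l \<Rightarrow> 'l \<Rightarrow> real) \<Rightarrow> nat \<Rightarrow> bool" where
  "condA br rho B \<alpha> \<gamma> k \<longleftrightarrow>
     (\<forall>L0\<in>lsub br rho k.
        (\<exists>A0 Z0. linear_on (lcs br (k + 1)) Z0 \<and>
           (\<forall>L. \<alpha> L L0 = 0) \<and>
           (\<forall>L. \<forall>M\<in>lcs br (k + 1). \<gamma> L L0 M = - B A0 (\<alpha> L M) + Z0 (br L M)))
        \<longrightarrow> L0 = 0)"

definition nondeg_subspace :: "('v::zero \<Rightarrow> 'v \<Rightarrow> real) \<Rightarrow> 'v set \<Rightarrow> bool" where
  "nondeg_subspace B V \<longleftrightarrow> (\<forall>v\<in>V. (\<forall>w\<in>V. B v w = 0) \<longrightarrow> v = 0)"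

text \<open>alpha applied to the kernel of the bracket map l \<otimes> l^{k+1} \<rightarrow> l, with tensors
  written as finite sums of pure tensors (lists of pairs).\<close>
definition alpha_ker :: "('l::real_vector \<Rightarrow> 'l \<Rightarrow> 'l) \<Rightarrow> ('l \<Rightarrow> 'l \<Rightarrow> 'v::real_vector) \<Rightarrow> nat \<Rightarrow> 'v set" where
  "alpha_ker br \<alpha> k =
     {sum_list (map (\<lambda>(L, M). \<alpha> L M) ps) | ps.
        (\<forall>(L, M)\<in>set ps. M \<in> lcs br (k + 1)) \<and> sum_list (map (\<lambda>(L, M). br L M) ps) = 0}"

definition condB :: "('l::real_vector \<Rightarrow> 'l \<Rightarrow> 'l) \<Rightarrow> ('v::real_vector \<Rightarrow> 'v \<Rightarrow> real) \<Rightarrow>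
    ('l \<Rightarrow> 'l \<Rightarrow> 'v) \<Rightarrow> nat \<Rightarrow> bool" where
  "condB br B \<alpha> k \<longleftrightarrow> nondeg_subspace B (alpha_ker br \<alpha> k)"

text \<open>Admissibility of the class of (alpha, gamma), for a representative with alpha(l,l) in a^l,
  where m is such that l^{m+2} = 0.\<close>
definition admissible ::
  "('l::real_vector \<Rightarrow> 'l \<Rightarrow> 'l) \<Rightarrow> ('l \<Rightarrow> 'v::real_vector \<Rightarrow> 'v) \<Rightarrow> ('v \<Rightarrow> 'v \<Rightarrow> real) \<Rightarrow>
    ('l \<Rightarrow> 'l \<Rightarrow> 'v) \<Rightarrow> ('l \<Rightarrow> 'l \<Rightarrow> 'l \<Rightarrow> real) \<Rightarrow> nat \<Rightarrow> bool" where
  "admissible br rho B \<alpha> \<gamma> m \<longleftrightarrow>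
     (\<forall>k\<le>m. condA br rho B \<alpha> \<gamma> k \<and> condB br B \<alpha> k)"

end

theory Submission
  imports Defs
begin

text \<open>Because \<alpha> takes values in invariants, d\<alpha> = 0 is the cyclic identity
  \<alpha>([x,y],z) - \<alpha>([x,z],y) + \<alpha>([y,z],x) = 0, which gives \<alpha>(l', z(l)) = 0.
  As l' is central and two-dimensional, \<gamma> vanishes on l' \<times> l' \<times> l', and
  d\<gamma> = \<langle>\<alpha> \<and> \<alpha>\<rangle>/2 at (c, L, c', L') with c, c' \<in> l' yields the symmetry
  \<langle>\<alpha>(c,L), \<alpha>(c',L')\<rangle> = \<langle>\<alpha>(c,L'), \<alpha>(c',L)\<rangle>.
  For j \<ge> 5 put c = [X3,Xj]. The cyclic identity and the bracket relations express every
  \<alpha>(l', x) through \<alpha>(l', X1) and \<alpha>(l', X2), and give \<alpha>(c, X2) = 0 and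
  \<alpha>(c, X1) = -\<alpha>(Z, Xj), the latter orthogonal to \<alpha>(l', l) by the symmetry.
  So \<alpha>(c, L) is orthogonal to \<alpha>(l', l); as [L, c] = 0, \<alpha>(L, c) lies in \<alpha> of the
  kernel of l \<otimes> l^2 \<rightarrow> l and is orthogonal to all of it, so condition (B_1) forces it to vanish.\<close>

lemma alternating_bilinear_antisym:
  assumes "\<And>x. linear (f x)" and "\<And>y. linear (\<lambda>x. f x y)" and "\<And>x. f x x = 0"
  shows "f y x = - f x y"
proof -
  have "0 = f (x + y) (x + y)" using assms(3) by simp
  also have "\<dots> = f x x + f x y + f y x + f y y"
    by (simp add: linear_add[OF assms(1)] linear_add[OF assms(2)] algebra_simps)
  finally show ?thesis by (simp add: assms(3) eq_neg_iff_add_eq_0 add.commute)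
qed

lemma span_pairE:
  assumes "w \<in> span {u, v :: 'a::real_vector}"
  obtains a b where "w = a *\<^sub>R u + b *\<^sub>R v"
proof -
  from assms obtain a where "w - a *\<^sub>R u \<in> span {v}" by (auto simp: span_insert)
  then obtain b where "w - a *\<^sub>R u = b *\<^sub>R v" by (auto simp: span_singleton)
  then have "w = a *\<^sub>R u + b *\<^sub>R v" by (simp add: algebra_simps)
  then show ?thesis by (rule that)
qed

lemma cochain3_vanishes_on_span_pair:
  assumes "cochain3 \<gamma>" and "x \<in> span {u, v}" "y \<in> span {u, v}" "z \<in> span {u, v}"
  shows "\<gamma> x y z = 0"
proof -
  from assms(2) obtain a b where x: "x = a *\<^sub>R u + b *\<^sub>R v" by (rule span_pairE)
  from assms(3) obtain a' b' where y: "y = a' *\<^sub>R u + b' *\<^sub>R v" by (rule span_pairE)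
  from assms(4) obtain a'' b'' where z: "z = a'' *\<^sub>R u + b'' *\<^sub>R v" by (rule span_pairE)
  have lin: "linear (\<lambda>x. \<gamma> x y z)" "linear (\<lambda>y. \<gamma> x y z)" "linear (\<gamma> x y)" for x y z
    using assms(1) by (simp_all add: cochain3_def)
  have alt: "\<gamma> x x y = 0" "\<gamma> x y y = 0" "\<gamma> x y x = 0" for x y
    using assms(1) by (simp_all add: cochain3_def)
  show ?thesis unfolding x y z
    by (simp add: linear_add[OF lin(1)] linear_scale[OF lin(1)] linear_add[OF lin(2)]
        linear_scale[OF lin(2)] linear_add[OF lin(3)] linear_scale[OF lin(3)] alt)
qed

lemma subset_span_pair_if_dim_2:
  assumes "dim V = 2" and "u \<in> V" "v \<in> V" and "independent {u, v}" "u \<noteq> v"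
  shows "V \<subseteq> span {u, v}"
proof
  fix w assume "w \<in> V"
  show "w \<in> span {u, v}"
  proof (rule ccontr)
    assume w: "w \<notin> span {u, v}"
    obtain A where A: "A \<subseteq> V" "V \<subseteq> span A" "card A = dim V"
      by (rule basis_exists)
    then have "finite A" using assms(1) by (metis card.infinite zero_neq_numeral)
    moreover have "independent (insert w {u, v})"
      using assms(4) w independent_insert[of w "{u, v}"] by simp
    moreover have "insert w {u, v} \<subseteq> span A"
      using A \<open>w \<in> V\<close> assms(2,3) by auto
    ultimately have "card (insert w {u, v}) \<le> card A"
      using independent_span_bound by blast
    moreover have "card (insert w {u, v}) = 3"
    proof -
      have "w \<noteq> u" "w \<noteq> v" using w span_base[of _ "{u, v}"] by auto
      then show ?thesis using assms(5) by simp
    qed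
    ultimately show False using A assms(1) by simp
  qed
qed

lemma lcs_two: "lcs br 2 = span {br x y | x y. True}"
  by (simp add: numeral_2_eq_2)

lemma bracket_in_lcs_two: "br x y \<in> lcs br 2"
  unfolding lcs_two by (rule span_base) blast

lemma alpha_eq_0_if_orthogonal_to_alpha_ker:
  fixes B :: "'v::real_vector \<Rightarrow> 'v \<Rightarrow> real"
  assumes "condB br B \<alpha> k" and linear_B: "\<And>v. linear (B v)"
    and "c \<in> lcs br (k + 1)" and "br L c = 0"
    and orthogonal: "\<And>L' M. M \<in> lcs br (k + 1) \<Longrightarrow> B (\<alpha> L c) (\<alpha> L' M) = 0"
  shows "\<alpha> L c = 0"
proof -
  have "\<alpha> L c \<in> alpha_ker br \<alpha> k"
    unfolding alpha_ker_def using assms(3,4) by (auto intro!: exI[of _ "[(L, c)]"])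
  moreover have "B (\<alpha> L c) w = 0" if w_ker: "w \<in> alpha_ker br \<alpha> k" for w
  proof -
    obtain ps where w: "w = sum_list (map (\<lambda>(L', M). \<alpha> L' M) ps)"
      and ps: "\<forall>(L', M) \<in> set ps. M \<in> lcs br (k + 1)"
      using w_ker unfolding alpha_ker_def by blast
    from ps show ?thesis unfolding w
    proof (induction ps)
      case Nil
      then show ?case by (simp add: linear_0[OF linear_B])
    next
      case (Cons p ps)
      then show ?case by (cases p) (simp add: linear_add[OF linear_B] orthogonal)
    qed
  qed
  ultimately show ?thesis using assms(1) unfolding condB_def nondeg_subspace_def by blast
qed

locale invariant_quad_cocycle =
  fixes br :: "'l::real_vector \<Rightarrow> 'l \<Rightarrow> 'l"
    and rho :: "'l \<Rightarrow> 'v::real_vector \<Rightarrow> 'v"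
    and B :: "'v \<Rightarrow> 'v \<Rightarrow> real"
    and \<alpha> :: "'l \<Rightarrow> 'l \<Rightarrow> 'v"
    and \<gamma> :: "'l \<Rightarrow> 'l \<Rightarrow> 'l \<Rightarrow> real"
  assumes lie: "lie_algebra br"
    and orth: "orthogonal_module br rho B"
    and cocycle: "quad_cocycle br rho B \<alpha> \<gamma>"
    and alpha_invariant: "\<And>x y. \<alpha> x y \<in> invariants rho"
begin

lemma br_antisym: "br y x = - br x y"
  using lie by (intro alternating_bilinear_antisym) (auto simp: lie_algebra_def)

lemma br_centre: "z \<in> centre br \<Longrightarrow> br x z = 0 \<and> br z x = 0"
  using br_antisym[of x z] by (simp add: centre_def)

lemma linear_alpha: "linear (\<alpha> x)" and linear_alpha_left: "linear (\<lambda>x. \<alpha> x y)"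
  and alpha_self: "\<alpha> x x = 0"
  using cocycle by (simp_all add: quad_cocycle_def cochain2_def)

lemmas alpha_linear_left = linear_0[OF linear_alpha_left] linear_add[OF linear_alpha_left]
  linear_neg[OF linear_alpha_left] linear_scale[OF linear_alpha_left]
lemmas alpha_linear_right = linear_0[OF linear_alpha] linear_add[OF linear_alpha]
  linear_neg[OF linear_alpha] linear_scale[OF linear_alpha]

lemma alpha_antisym: "\<alpha> y x = - \<alpha> x y"
  by (rule alternating_bilinear_antisym[OF linear_alpha linear_alpha_left alpha_self])

lemma cochain3_gamma: "cochain3 \<gamma>"
  using cocycle by (simp add: quad_cocycle_def)

lemma linear_gamma_left: "linear (\<lambda>x. \<gamma> x y z)"
  using cochain3_gamma by (simp add: cochain3_def)

lemma linear_B: "linear (B u)" and B_sym: "B u v = B v u"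
  using orth by (simp_all add: orthogonal_module_def)

lemma linear_B_left: "linear (\<lambda>u. B u v)"
proof -
  have "(\<lambda>u. B u v) = B v" using B_sym by (rule ext)
  then show ?thesis using linear_B by simp
qed

lemmas B_bilinear = linear_0[OF linear_B] linear_add[OF linear_B] linear_neg[OF linear_B]
  linear_diff[OF linear_B] linear_scale[OF linear_B]
  linear_0[OF linear_B_left] linear_add[OF linear_B_left] linear_neg[OF linear_B_left]
  linear_diff[OF linear_B_left] linear_scale[OF linear_B_left]

lemma alpha_cyclic: "\<alpha> (br x y) z - \<alpha> (br x z) y + \<alpha> (br y z) x = 0"
proof -
  have "rho a (\<alpha> b c) = 0" for a b c using alpha_invariant by (simp add: invariants_def)
  moreover have "d2 br rho \<alpha> x y z = 0"
    using cocycle by (simp add: quad_cocycle_def)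
  ultimately show ?thesis
    unfolding d2_def by (simp add: algebra_simps)
qed

lemma alpha_derived_centre:
  assumes "w \<in> lcs br 2" and "z \<in> centre br"
  shows "\<alpha> w z = 0"
proof -
  have "w \<in> span {br x y | x y. True}" using assms(1) by (simp add: lcs_two)
  then show ?thesis
  proof (induction rule: span_induct)
    case base
    show ?case by (simp add: subspace_def alpha_linear_left)
  next
    case (step w)
    then obtain x y where "w = br x y" by blast
    then show ?case
      using alpha_cyclic[of x y z] br_centre[OF assms(2), of x] br_centre[OF assms(2), of y]
      by (simp add: alpha_linear_left)
  qed
qed

text \<open>At (c, L, c', L') every term of d\<gamma> vanishes, and \<langle>\<alpha> \<and> \<alpha>\<rangle> reduces to twice
  the difference of the two sides.\<close>
lemma B_alpha_swap:
  assumes derived_central: "lcs br 2 \<subseteq> centre br"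
    and gamma_derived: "\<And>w c c'. w \<in> lcs br 2 \<Longrightarrow> c \<in> lcs br 2 \<Longrightarrow> c' \<in> lcs br 2 \<Longrightarrow> \<gamma> w c c' = 0"
    and c: "c \<in> lcs br 2" and c': "c' \<in> lcs br 2"
  shows "B (\<alpha> c L) (\<alpha> c' L') = B (\<alpha> c L') (\<alpha> c' L)"
proof -
  have central: "c \<in> centre br" "c' \<in> centre br" using c c' derived_central by auto
  have "\<gamma> 0 y z = 0" for y z
    using linear_0[OF linear_gamma_left] .
  then have "d3 br \<gamma> c L c' L' = 0"
    unfolding d3_def using br_centre[OF central(1)] br_centre[OF central(2)]
      gamma_derived[OF bracket_in_lcs_two c c'] by simp
  moreover have "wedge_contr B \<alpha> \<alpha> c L c' L' =
      2 * B (\<alpha> c L) (\<alpha> c' L') - 2 * B (\<alpha> c L') (\<alpha> c' L)"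
    unfolding wedge_contr_def alpha_derived_centre[OF c central(2)]
    using B_sym[of "\<alpha> c' L'" "\<alpha> c L"] alpha_antisym[of L c']
    by (simp add: B_bilinear B_sym[of "\<alpha> c' L" "\<alpha> c L'"])
  moreover have "d3 br \<gamma> c L c' L' = (1/2) * wedge_contr B \<alpha> \<alpha> c L c' L'"
    using cocycle by (simp add: quad_cocycle_def)
  ultimately show ?thesis by simp
qed

end

locale invariant_quad_cocycle_XYZ = invariant_quad_cocycle +
  fixes X :: "nat \<Rightarrow> 'l::real_vector" and Y Z :: 'l and n :: nat
  assumes derived_central: "lcs br 2 \<subseteq> centre br"
    and dim_derived: "dim (lcs br 2) = 2"
    and independent_Y_Z: "independent {Y, Z}" and Y_neq_Z: "Y \<noteq> Z"
    and basis_span: "span (X ` {1..n} \<union> {Y, Z}) = UNIV"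
    and br12: "br (X 1) (X 2) = Y"
    and br13: "br (X 1) (X 3) = Z"
    and br23: "br (X 2) (X 3) = 0"
    and br14: "br (X 1) (X 4) = 0"
    and br24: "br (X 2) (X 4) = Z"
    and br1j: "j \<in> {5..n} \<Longrightarrow> br (X 1) (X j) = 0"
    and br2j: "j \<in> {5..n} \<Longrightarrow> br (X 2) (X j) = 0"
begin

lemma Y_derived: "Y \<in> lcs br 2" and Z_derived: "Z \<in> lcs br 2"
  using bracket_in_lcs_two br12 br13 by metis+

lemma derived_eq_span: "lcs br 2 = span {Y, Z}"
proof
  show "lcs br 2 \<subseteq> span {Y, Z}"
    by (rule subset_span_pair_if_dim_2[OF dim_derived Y_derived Z_derived independent_Y_Z Y_neq_Z])
  show "span {Y, Z} \<subseteq> lcs br 2"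
    using Y_derived Z_derived by (intro span_minimal) (auto simp: lcs_two)
qed

lemma alpha_derived_derived: "c \<in> lcs br 2 \<Longrightarrow> c' \<in> lcs br 2 \<Longrightarrow> \<alpha> c c' = 0"
  using alpha_derived_centre derived_central by blast

lemma B_alpha_derived_swap:
  assumes "c \<in> lcs br 2" and "c' \<in> lcs br 2"
  shows "B (\<alpha> c L) (\<alpha> c' L') = B (\<alpha> c L') (\<alpha> c' L)"
  using derived_central _ assms
proof (rule B_alpha_swap)
  show "\<gamma> w c c' = 0" if "w \<in> lcs br 2" "c \<in> lcs br 2" "c' \<in> lcs br 2" for w c c'
    using cochain3_vanishes_on_span_pair[OF cochain3_gamma] that by (simp add: derived_eq_span)
qed

lemma alpha_Y_X_eq_0: "br (X 1) (X j) = 0 \<Longrightarrow> br (X 2) (X j) = 0 \<Longrightarrow> \<alpha> Y (X j) = 0"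
  using alpha_cyclic[of "X 1" "X 2" "X j"] br12 by (simp add: alpha_linear_left)

lemma alpha_Y_X3: "\<alpha> Y (X 3) = \<alpha> Z (X 2)"
  using alpha_cyclic[of "X 1" "X 2" "X 3"] br12 br13 br23 by (simp add: alpha_linear_left)

lemma alpha_Y_X4: "\<alpha> Y (X 4) = - \<alpha> Z (X 1)"
  using alpha_cyclic[of "X 1" "X 2" "X 4"] br12 br14 br24
  by (simp add: alpha_linear_left eq_neg_iff_add_eq_0)

lemma alpha_Z_X3: "\<alpha> Z (X 3) = \<alpha> (br (X 3) (X 4)) (X 2)"
  using alpha_cyclic[of "X 2" "X 3" "X 4"] br23 br24 by (simp add: alpha_linear_left)

lemma alpha_Z_X_eq: "br (X 1) (X j) = 0 \<Longrightarrow> \<alpha> Z (X j) = - \<alpha> (br (X 3) (X j)) (X 1)"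
  using alpha_cyclic[of "X 1" "X 3" "X j"] br13 by (simp add: alpha_linear_left eq_neg_iff_add_eq_0)

lemma alpha_X3_X_X2_eq_0: "br (X 2) (X j) = 0 \<Longrightarrow> \<alpha> (br (X 3) (X j)) (X 2) = 0"
  using alpha_cyclic[of "X 2" "X 3" "X j"] br23 by (simp add: alpha_linear_left)

lemma alpha_derived_in_span_X12:
  assumes "c \<in> lcs br 2"
  shows "\<alpha> c x \<in> span {\<alpha> c' (X i) | c' i. c' \<in> lcs br 2 \<and> i \<in> {1, 2}}"
    (is "_ \<in> span ?S")
proof -
  have S: "\<alpha> c' (X i) \<in> span ?S" if "c' \<in> lcs br 2" "i \<in> {1, 2}" for c' i
    using that by (intro span_base) blast
  have on_basis: "\<alpha> Y x \<in> span ?S \<and> \<alpha> Z x \<in> span ?S" if "x \<in> X ` {1..n} \<union> {Y, Z}" for x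
  proof -
    have "i = 1 \<or> i = 2 \<or> i = 3 \<or> i = 4 \<or> i \<in> {5..n}" if "i \<in> {1..n}" for i :: nat
      using that by auto
    with that consider "x \<in> lcs br 2" | "x \<in> {X 1, X 2}" | "x = X 3" | "x = X 4"
      | i where "i \<in> {5..n}" "x = X i"
      using Y_derived Z_derived by blast
    then show ?thesis
    proof cases
      case 1
      then show ?thesis using alpha_derived_derived Y_derived Z_derived by (simp add: span_zero)
    next
      case 2
      then show ?thesis using S Y_derived Z_derived by auto
    next
      case 3
      then show ?thesis
        using S[OF Z_derived, of 2] S[OF bracket_in_lcs_two[of br "X 3" "X 4"], of 2]
          alpha_Y_X3 alpha_Z_X3 by simp
    next
      case 4
      then show ?thesis
        using S[OF Z_derived, of 1] S[OF bracket_in_lcs_two[of br "X 3" "X 4"], of 1]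
          alpha_Y_X4 alpha_Z_X_eq[OF br14] by (simp add: span_neg)
    next
      case (5 i)
      then show ?thesis
        using S[OF bracket_in_lcs_two[of br "X 3" "X i"], of 1] alpha_Y_X_eq_0[OF br1j br2j] alpha_Z_X_eq[OF br1j]
        by (simp add: span_neg span_zero)
    qed
  qed
  have "x \<in> span (X ` {1..n} \<union> {Y, Z})" unfolding basis_span by (rule UNIV_I)
  then have "\<alpha> Y x \<in> span ?S \<and> \<alpha> Z x \<in> span ?S"
  proof (induction rule: span_induct)
    case base
    show ?case by (simp add: subspace_def alpha_linear_right span_zero span_add span_scale)
  next
    case (step x)
    then show ?case by (rule on_basis)
  qed
  moreover obtain a b where "c = a *\<^sub>R Y + b *\<^sub>R Z"
    using assms derived_eq_span by (auto elim: span_pairE)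
  ultimately show ?thesis by (simp add: alpha_linear_left span_add span_scale)
qed

lemma B_alpha_Z_X_orthogonal:
  assumes br1: "br (X 1) (X j) = 0" and br2: "br (X 2) (X j) = 0" and c: "c \<in> lcs br 2"
  shows "B (\<alpha> Z (X j)) (\<alpha> c L) = 0"
proof -
  define cj where "cj = br (X 3) (X j)"
  define c34 where "c34 = br (X 3) (X 4)"
  define dj where "dj = br (X j) (X 4)"
  have derived: "cj \<in> lcs br 2" "c34 \<in> lcs br 2" "dj \<in> lcs br 2"
    unfolding cj_def c34_def dj_def by (rule bracket_in_lcs_two)+
  have alpha_Y_Xj: "\<alpha> Y (X j) = 0" using alpha_Y_X_eq_0[OF br1 br2] .
  have orth_Y: "B (\<alpha> Z (X j)) (\<alpha> Y L) = 0"
    using B_alpha_derived_swap[OF Z_derived Y_derived, of "X j" L] alpha_Y_Xj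
    by (simp add: B_bilinear)
  have alpha_cj_X4: "\<alpha> cj (X 4) = \<alpha> c34 (X j) - \<alpha> dj (X 3)"
    using alpha_cyclic[of "X 3" "X j" "X 4"] by (simp add: cj_def c34_def dj_def algebra_simps)
  have alpha_dj_X2: "\<alpha> dj (X 2) = \<alpha> Z (X j)"
    using alpha_cyclic[of "X 2" "X 4" "X j"] br24 br2 br_antisym[of "X 4" "X j"]
    by (simp add: dj_def alpha_linear_left eq_neg_iff_add_eq_0)
  \<comment> \<open>the chain returns to its starting value with the opposite sign\<close>
  have "B (\<alpha> Z (X j)) (\<alpha> Z L) = - B (\<alpha> cj (X 1)) (\<alpha> Z L)"
    using alpha_Z_X_eq[OF br1] by (simp add: cj_def B_bilinear)
  also have "\<dots> = - B (\<alpha> cj L) (\<alpha> Z (X 1))"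
    using B_alpha_derived_swap[OF derived(1) Z_derived] by simp
  also have "\<dots> = B (\<alpha> cj (X 4)) (\<alpha> Y L)"
    using alpha_Y_X4 B_alpha_derived_swap[OF derived(1) Y_derived, of L "X 4"]
    by (simp add: B_bilinear)
  also have "\<dots> = B (\<alpha> c34 (X j)) (\<alpha> Y L) - B (\<alpha> dj (X 3)) (\<alpha> Y L)"
    by (simp add: alpha_cj_X4 B_bilinear)
  also have "B (\<alpha> c34 (X j)) (\<alpha> Y L) = 0"
    using B_alpha_derived_swap[OF derived(2) Y_derived, of "X j" L] alpha_Y_Xj
    by (simp add: B_bilinear)
  also have "B (\<alpha> dj (X 3)) (\<alpha> Y L) = B (\<alpha> Z (X j)) (\<alpha> Z L)"
    using B_alpha_derived_swap[OF derived(3) Y_derived, of "X 3" L] alpha_Y_X3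
      B_alpha_derived_swap[OF derived(3) Z_derived, of L "X 2"] alpha_dj_X2 by simp
  finally have orth_Z: "B (\<alpha> Z (X j)) (\<alpha> Z L) = 0" by simp
  obtain a b where "c = a *\<^sub>R Y + b *\<^sub>R Z"
    using c derived_eq_span by (auto elim: span_pairE)
  then show ?thesis using orth_Y orth_Z by (simp add: alpha_linear_left B_bilinear)
qed

lemma B_alpha_X3_X_orthogonal:
  assumes br1: "br (X 1) (X j) = 0" and br2: "br (X 2) (X j) = 0" and c: "c \<in> lcs br 2"
  shows "B (\<alpha> (br (X 3) (X j)) L) (\<alpha> c L') = 0"
proof -
  define cj where "cj = br (X 3) (X j)"
  have cj: "cj \<in> lcs br 2" unfolding cj_def by (rule bracket_in_lcs_two)
  have "\<alpha> c L' \<in> span {\<alpha> c' (X i) | c' i. c' \<in> lcs br 2 \<and> i \<in> {1, 2}}"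
    by (rule alpha_derived_in_span_X12[OF c])
  then have "B (\<alpha> cj L) (\<alpha> c L') = 0"
  proof (induction rule: span_induct)
    case base
    show ?case by (simp add: subspace_def B_bilinear)
  next
    case (step w)
    then obtain c' i where c': "c' \<in> lcs br 2" and i: "i \<in> {1, 2}" and w: "w = \<alpha> c' (X i)"
      by blast
    have "B (\<alpha> cj L) w = B (\<alpha> cj (X i)) (\<alpha> c' L)"
      unfolding w by (rule B_alpha_derived_swap[OF cj c'])
    also have "\<dots> = 0"
      using i alpha_Z_X_eq[OF br1] alpha_X3_X_X2_eq_0[OF br2]
        B_alpha_Z_X_orthogonal[OF br1 br2 c'] by (auto simp: cj_def B_bilinear)
    finally show ?case .
  qed
  then show ?thesis by (simp add: cj_def)
qed

lemma alpha_X3_X_eq_0: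
  assumes "condB br B \<alpha> 1" and br1: "br (X 1) (X j) = 0" and br2: "br (X 2) (X j) = 0"
  shows "\<alpha> (br (X 3) (X j)) L = 0"
proof -
  have cj: "br (X 3) (X j) \<in> lcs br (1 + 1)" unfolding one_add_one by (rule bracket_in_lcs_two)
  have "\<alpha> L (br (X 3) (X j)) = 0"
  proof (rule alpha_eq_0_if_orthogonal_to_alpha_ker[OF assms(1) linear_B cj])
    show "br L (br (X 3) (X j)) = 0"
      using br_centre derived_central bracket_in_lcs_two by blast
    show "B (\<alpha> L (br (X 3) (X j))) (\<alpha> L' M) = 0" if "M \<in> lcs br (1 + 1)" for L' M
    proof -
      have "M \<in> lcs br 2" using that by (simp only: one_add_one)
      then have "B (\<alpha> (br (X 3) (X j)) L) (\<alpha> M L') = 0" by (rule B_alpha_X3_X_orthogonal[OF br1 br2])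
      then show ?thesis
        by (simp add: alpha_antisym[of L] alpha_antisym[of L' M] B_bilinear)
    qed
  qed
  then show ?thesis using alpha_antisym by (metis neg_equal_0_iff_equal)
qed

end

theorem lemma7:
  fixes br :: "'l::real_vector \<Rightarrow> 'l \<Rightarrow> 'l"
    and rho :: "'l \<Rightarrow> 'v::real_vector \<Rightarrow> 'v"
    and B :: "'v \<Rightarrow> 'v \<Rightarrow> real"
    and \<alpha> :: "'l \<Rightarrow> 'l \<Rightarrow> 'v"
    and \<gamma> :: "'l \<Rightarrow> 'l \<Rightarrow> 'l \<Rightarrow> real"
    and X :: "nat \<Rightarrow> 'l" and Y Z :: 'l
    and n m :: nat
  assumes lie: "lie_algebra br"
    and nilp: "nilpotent_lie br"
    and dim_der: "dim (lcs br 2) = 2"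
    and der_central: "lcs br 2 \<subseteq> centre br"
    and n4: "n \<ge> 4"
    and basis_inj: "inj_on X {1..n}"
    and basis_Y: "Y \<notin> X ` {1..n}" and basis_Z: "Z \<notin> X ` {1..n}" and YZ: "Y \<noteq> Z"
    and basis_indep: "independent (X ` {1..n} \<union> {Y, Z})"
    and basis_span: "span (X ` {1..n} \<union> {Y, Z}) = UNIV"
    and br12: "br (X 1) (X 2) = Y"
    and br13: "br (X 1) (X 3) = Z"
    and br23: "br (X 2) (X 3) = 0"
    and br14: "br (X 1) (X 4) = 0"
    and br24: "br (X 2) (X 4) = Z"
    and br_j: "\<forall>j\<in>{5..n}. br (X 1) (X j) = 0 \<and> br (X 2) (X j) = 0"
    and orth: "orthogonal_module br rho B"
    and ss: "semisimple_module rho"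
    and cocycle: "quad_cocycle br rho B \<alpha> \<gamma>"
    and inv: "\<forall>x y. \<alpha> x y \<in> invariants rho"
    and m_nil: "lcs br (m + 2) = {0}"
    and adm: "admissible br rho B \<alpha> \<gamma> m"
  shows "\<forall>j\<in>{5..n}. \<forall>L. \<alpha> (br (X 3) (X j)) L = 0"
proof -
  \<comment> \<open>Semisimplicity of a only serves, in the paper, to choose a representative with
    \<alpha>(l, l) \<subseteq> a^l, which is assumed here.\<close>
  have independent_Y_Z: "independent {Y, Z}"
    using basis_indep by (rule independent_mono) blast
  interpret invariant_quad_cocycle_XYZ br rho B \<alpha> \<gamma> X Y Z n
    using lie orth cocycle inv dim_der der_central independent_Y_Z YZ basis_span
      br12 br13 br23 br14 br24 br_j by unfold_locales simp_all
  have "Y \<noteq> 0" using independent_Y_Z dependent_zero by blast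
  then have "lcs br 2 \<noteq> {0}" using Y_derived by blast
  then have "m \<noteq> 0" using m_nil by (metis add_0)
  then have "condB br B \<alpha> 1" using adm by (simp add: admissible_def)
  then show ?thesis using alpha_X3_X_eq_0 br_j by blast
qed

end
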